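(* Consider the robust multi-robot active target tracking problem and the algorithm RATT described in the context. Let $\mathbf{u}_{\mathcal{V},t}$ be the control inputs returned by RATT, let $(\mathcal{A}_s^\star,\mathcal{A}_c^\star)\in\arg\min_{\mathcal{A}_s\subseteq\mathcal{V},\,|\mathcal{A}_s|\le\alpha_s,\ \mathcal{A}_c\subseteq\mathcal{E},\,|\mathcal{A}_c|\le\alpha_c}\Phi(\mathcal{V}\setminus\mathcal{A}_s,\mathcal{E}\setminus\mathcal{A}_c)$ be a worst-case removal for these inputs, and let $\Phi^\star_{\mathcal{V},\alpha_s,\mathcal{E},\alpha_c}$ be the optimal value of the problem. Let $\alpha_{c,s}$ be the number computed by CAA$(N,\alpha_c)$. Then: 1) if $\Phi$ is non-decreasing and (without loss of generality) normalized and non-negative, then $$\frac{\Phi(\mathcal{V}\setminus\mathcal{A}_s^\star,\mathcal{E}\setminus\mathcal{A}_c^\star)}{\Phi^\star_{\mathcal{V},\alpha_s,\mathcal{E},\alpha_c}}\ \ge\ \min\Big[(1-c_\Phi)^3,\ \frac{(1-c_\Phi)^2}{\alpha_{c,s}}\Big];$$ 2) if, additionally, $\Phi$ is submodular, then $$\frac{\Phi(\mathcal{V}\setminus\mathcal{A}_s^\star,\mathcal{E}\setminus\mathcal{A}_c^\star)}{\Phi^\star_{\mathcal{V},\alpha_s,\mathcal{E},\alpha_c}}\ \ge\ \min\Big[\frac{1-k_\Phi}{1+k_\Phi},\ \frac{1-k_\Phi}{\alpha_{c,s}}\Big].$$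
   Context: Setting. There are $N$ robots $\mathcal{V}=\{1,\dots,N\}$; robot $i$ has dynamics $\mathbf{x}_{i,t+1}=f_i(\mathbf{x}_{i,t},\mathbf{u}_{i,t})$ with $\mathbf{u}_{i,t}$ chosen from a finite set $\mathcal{U}_i$; $\mathcal{U}_{\mathcal{V}}=\bigcup_i\mathcal{U}_i$. Robots track targets with noisy sensors and an extended Kalman filter; communication is modeled by the complete graph on $\mathcal{V}$ with edge set $\mathcal{E}$, $|\mathcal{E}|=N(N-1)/2$. For a choice of control inputs, a set $\mathcal{S}\subseteq\mathcal{V}$ of robots whose sensing is not attacked and a set $\mathcal{L}\subseteq\mathcal{E}$ of non-attacked links, the team tracking quality $\Phi(\mathcal{S},\mathcal{L})$ (one step ahead, a function of the filter's posterior covariance) is the maximum, over the connected components $C$ of the graph $(\mathcal{V},\mathcal{L})$, of the tracking quality obtained by fusing the measurements of the robots in $\mathcal{S}\cap C$ (robots with attacked sensing still relay messages). Without communication attacks, $\Phi(\mathcal{W})$ for $\mathcal{W}\subseteq\mathcal{V}$ denotes the quality from fusing the measurements of robots $\mathcal{W}$; $\Phi$ is regarded as a set function on the robots (with their chosen inputs). The problem (given $\alpha_s\le N$, $\alpha_c\le N(N-1)/2$) is $$\max_{\mathbf{u}_{\mathcal{V},t}\in\mathcal{U}_{\mathcal{V}}}\ \min_{\mathcal{A}_s\subseteq\mathcal{V},|\mathcal{A}_s|\le\alpha_s,\ \mathcal{A}_c\subseteq\mathcal{E},|\mathcal{A}_c|\le\alpha_c}\Phi(\mathcal{V}\setminus\mathcal{A}_s,\mathcal{E}\setminus\mathcal{A}_c),$$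 whose optimal value is $\Phi^\star_{\mathcal{V},\alpha_s,\mathcal{E},\alpha_c}$. CAA$(N,\alpha_c)$: set $e_r=N(N-1)/2-\alpha_c$; for $n=1,2,\dots,N$ in increasing order compute $q_n=\lfloor N/n\rfloor$, $r_n=N-nq_n$, $\bar e_n=q_n\frac{n(n-1)}{2}+\frac{r_n(r_n-1)}{2}$, and let $n_{\max}$ be the first $n$ with $e_r\le\bar e_n$; return $\alpha_{c,s}=N-n_{\max}$. RATT: compute $\alpha_{c,s}$ by CAA and set $\alpha=\alpha_s+\alpha_{c,s}$. If $\alpha<N$: for each robot $i$ compute $\max_{\mathbf{u}_i\in\mathcal{U}_i}\Phi(\{i\})$; let $\mathcal{V}_b$ be $\alpha$ robots with the largest such values ("bait" robots), and give each the input attaining its individual maximum; then for the remaining robots run the standard greedy algorithm: starting from $\mathcal{V}_g=\emptyset$, repeatedly pick a not-yet-assigned robot $i'\notin\mathcal{V}_b\cup\mathcal{V}_g$ and an input for it maximizing the marginal gain $\Phi(\mathcal{V}_g\cup\{i'\})-\Phi(\mathcal{V}_g)$, and add $i'$ to $\mathcal{V}_g$, until all robots are assigned. If $\alpha\ge N$: give every robot the input maximizing its individual quality $\Phi(\{i\})$. Set-function notions, for $\phi:2^{\mathcal{X}}\to\mathbb{R}$ on finite $\mathcal{X}$: normalized if $\phi(\emptyset)=0$; non-decreasing if $\mathcal{Y}\subseteq\mathcal{Y}'$ implies $\phi(\mathcal{Y})\le\phi(\mathcal{Y}')$; submodular if $\phi(\mathcal{Y}\cup\{x\})-\phi(\mathcal{Y})\ge\phi(\mathcal{Y}'\cup\{x\})-\phi(\mathcal{Y}')$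 for $\mathcal{Y}\subseteq\mathcal{Y}'$. Curvature (non-decreasing submodular $\phi$ with $\phi(\{x\})\ne0$): $k_\phi=1-\min_{x\in\mathcal{X}}\frac{\phi(\mathcal{X})-\phi(\mathcal{X}\setminus\{x\})}{\phi(\{x\})}$. Total curvature (non-decreasing $\phi$): $c_\phi=1-\min_{x\in\mathcal{X}}\min_{\mathcal{Y},\mathcal{Y}'\subseteq\mathcal{X}\setminus\{x\}}\frac{\phi(\mathcal{Y}\cup\{x\})-\phi(\mathcal{Y})}{\phi(\mathcal{Y}'\cup\{x\})-\phi(\mathcal{Y}')}$. *)

theory Defs
  imports Complex_Main "HOL-Library.FuncSet"
begin

text \<open>The tracking quality
  phi is a set function on robot-input pairs (i, u); fusing the measurements of
  robots W under the input assignment u is phi (sel u W).\<close>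

definition sel :: "(nat \<Rightarrow> 'u) \<Rightarrow> nat set \<Rightarrow> (nat \<times> 'u) set" where
  "sel u W = (\<lambda>i. (i, u i)) ` W"

definition ground :: "nat \<Rightarrow> (nat \<Rightarrow> 'u set) \<Rightarrow> (nat \<times> 'u) set" where
  "ground N U = Sigma {..<N} U"

definition edges :: "nat \<Rightarrow> nat set set" where
  "edges N = {{i, j} | i j. i < N \<and> j < N \<and> i \<noteq> j}"

definition edge_rel :: "nat set set \<Rightarrow> nat rel" where
  "edge_rel L = {(a, b). {a, b} \<in> L}"

definition comp :: "nat set set \<Rightarrow> nat \<Rightarrow> nat set" where
  "comp L i = {j. (i, j) \<in> (edge_rel L)\<^sup>*}"

definition Phi_att ::
  "((nat \<times> 'u) set \<Rightarrow> real) \<Rightarrow> nat \<Rightarrow> (nat \<Rightarrow> 'u) \<Rightarrow> nat set \<Rightarrow> nat set set \<Rightarrow> real" where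
  "Phi_att phi N u S L = Max ((\<lambda>i. phi (sel u (S \<inter> comp L i))) ` {..<N})"

definition feasible_attack :: "nat \<Rightarrow> nat \<Rightarrow> nat \<Rightarrow> nat set \<Rightarrow> nat set set \<Rightarrow> bool" where
  "feasible_attack N as ac As Ac \<longleftrightarrow>
     As \<subseteq> {..<N} \<and> card As \<le> as \<and> Ac \<subseteq> edges N \<and> card Ac \<le> ac"

definition worst ::
  "((nat \<times> 'u) set \<Rightarrow> real) \<Rightarrow> nat \<Rightarrow> nat \<Rightarrow> nat \<Rightarrow> (nat \<Rightarrow> 'u) \<Rightarrow> real" where
  "worst phi N as ac u =
     Min {Phi_att phi N u ({..<N} - As) (edges N - Ac) | As Ac. feasible_attack N as ac As Ac}"

definition opt_value ::
  "((nat \<times> 'u) set \<Rightarrow> real) \<Rightarrow> nat \<Rightarrow> (nat \<Rightarrow> 'u set) \<Rightarrow> nat \<Rightarrow> nat \<Rightarrow> real" where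
  "opt_value phi N U as ac = Max ((\<lambda>u. worst phi N as ac u) ` (PiE {..<N} U))"

definition caa_ebar :: "nat \<Rightarrow> nat \<Rightarrow> nat" where
  "caa_ebar N n = (N div n) * ((n * (n - 1)) div 2) + ((N mod n) * (N mod n - 1)) div 2"

definition caa :: "nat \<Rightarrow> nat \<Rightarrow> nat" where
  "caa N ac = N - (LEAST n. 1 \<le> n \<and> (N * (N - 1)) div 2 - ac \<le> caa_ebar N n)"

text \<open>u is a possible output of RATT (ties broken arbitrarily).\<close>
definition ratt_output ::
  "((nat \<times> 'u) set \<Rightarrow> real) \<Rightarrow> nat \<Rightarrow> (nat \<Rightarrow> 'u set) \<Rightarrow> nat \<Rightarrow> nat \<Rightarrow> (nat \<Rightarrow> 'u) \<Rightarrow> bool" where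
  "ratt_output phi N U as ac u \<longleftrightarrow>
    (let a = as + caa N ac in
     (a < N \<longrightarrow>
       (\<exists>Vb g.
          Vb \<subseteq> {..<N} \<and> card Vb = a \<and>
          (\<forall>i\<in>Vb. u i \<in> U i \<and> (\<forall>v\<in>U i. phi {(i, v)} \<le> phi {(i, u i)})) \<and>
          (\<forall>i\<in>Vb. \<forall>j\<in>{..<N} - Vb. \<forall>v\<in>U j. phi {(j, v)} \<le> phi {(i, u i)}) \<and>
          distinct g \<and> set g = {..<N} - Vb \<and>
          (\<forall>k<length g.
             u (g ! k) \<in> U (g ! k) \<and>
             (\<forall>i'\<in>{..<N} - Vb - set (take k g). \<forall>v\<in>U i'.
                phi (sel u (set (take k g)) \<union> {(i', v)}) - phi (sel u (set (take k g)))
                \<le> phi (sel u (set (take k g)) \<union> {(g ! k, u (g ! k))}) - phi (sel u (set (take k g)))))))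
     \<and> (\<not> a < N \<longrightarrow> (\<forall>i<N. u i \<in> U i \<and> (\<forall>v\<in>U i. phi {(i, v)} \<le> phi {(i, u i)}))))"

definition normalized :: "('a set \<Rightarrow> real) \<Rightarrow> bool" where
  "normalized f \<longleftrightarrow> f {} = 0"

definition nondecreasing_on :: "'a set \<Rightarrow> ('a set \<Rightarrow> real) \<Rightarrow> bool" where
  "nondecreasing_on X f \<longleftrightarrow> (\<forall>A B. A \<subseteq> B \<longrightarrow> B \<subseteq> X \<longrightarrow> f A \<le> f B)"

definition nonneg_on :: "'a set \<Rightarrow> ('a set \<Rightarrow> real) \<Rightarrow> bool" where
  "nonneg_on X f \<longleftrightarrow> (\<forall>A. A \<subseteq> X \<longrightarrow> 0 \<le> f A)"

definition submodular_on :: "'a set \<Rightarrow> ('a set \<Rightarrow> real) \<Rightarrow> bool" where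
  "submodular_on X f \<longleftrightarrow> (\<forall>A B x. A \<subseteq> B \<longrightarrow> B \<subseteq> X \<longrightarrow> x \<in> X \<longrightarrow>
      f (A \<union> {x}) - f A \<ge> f (B \<union> {x}) - f B)"

definition curvature :: "'a set \<Rightarrow> ('a set \<Rightarrow> real) \<Rightarrow> real" where
  "curvature X f = 1 - Min ((\<lambda>x. (f X - f (X - {x})) / f {x}) ` X)"

text \<open>Total curvature; ratios with a zero denominator (= +infinity or undefined) are
  omitted from the minimum.\<close>
definition total_curvature :: "'a set \<Rightarrow> ('a set \<Rightarrow> real) \<Rightarrow> real" where
  "total_curvature X f = 1 - Min {(f (Y \<union> {x}) - f Y) / (f (Y' \<union> {x}) - f Y') | x Y Y'.
      x \<in> X \<and> Y \<subseteq> X - {x} \<and> Y' \<subseteq> X - {x} \<and> f (Y' \<union> {x}) - f Y' \<noteq> 0}"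

end

theory Submission
  imports Defs
begin

text \<open>RATT gives \<alpha> = \<alpha>_s + \<alpha>_cs bait robots their individually best inputs; their
  singleton qualities dominate those of all other robots, whose inputs are chosen greedily. CAA
  chooses \<alpha>_cs so that (i) removing at most \<alpha>_c links always leaves a connected component
  of at least N - \<alpha>_cs robots, and (ii) \<alpha>_cs robots can be cut off from the others by
  removing at most \<alpha>_c links. By (i), under any feasible attack some surviving component misses
  at most as many greedy robots as it contains unattacked bait robots, each individually better.
  By (ii), the optimum is at most its value under the attack that removes \<alpha>_s bait robots and
  cuts off the remaining ones: each surviving component then consists of greedy robots only or
  of at most \<alpha>_cs bait robots. The curvature inequalities turn both comparisons into the
  stated ratios, the greedy robots contributing the classical greedy factors (1 - c)^2 and
  1 / (1 + k).\<close>

section \<open>Curvature of set functions\<close>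

lemma nondecreasing_onD: "nondecreasing_on X f \<Longrightarrow> A \<subseteq> B \<Longrightarrow> B \<subseteq> X \<Longrightarrow> f A \<le> f B"
  unfolding nondecreasing_on_def by blast

lemma submodular_onD:
  "submodular_on X f \<Longrightarrow> A \<subseteq> B \<Longrightarrow> B \<subseteq> X \<Longrightarrow> x \<in> X \<Longrightarrow> f (B \<union> {x}) - f B \<le> f (A \<union> {x}) - f A"
  unfolding submodular_on_def by blast

lemma nonneg_onD: "nonneg_on X f \<Longrightarrow> A \<subseteq> X \<Longrightarrow> 0 \<le> f A"
  unfolding nonneg_on_def by blast

lemma finite_total_curvature_ratios:
  assumes "finite X"
  shows "finite {(f (Y \<union> {x}) - f Y) / (f (Y' \<union> {x}) - f Y') | x Y Y'.
      x \<in> X \<and> Y \<subseteq> X - {x} \<and> Y' \<subseteq> X - {x} \<and> f (Y' \<union> {x}) - f Y' \<noteq> 0}"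
proof -
  have "{(f (Y \<union> {x}) - f Y) / (f (Y' \<union> {x}) - f Y') | x Y Y'.
      x \<in> X \<and> Y \<subseteq> X - {x} \<and> Y' \<subseteq> X - {x} \<and> f (Y' \<union> {x}) - f Y' \<noteq> 0}
    \<subseteq> (\<lambda>(x, Y, Y'). (f (Y \<union> {x}) - f Y) / (f (Y' \<union> {x}) - f Y')) ` (X \<times> Pow X \<times> Pow X)"
    by (auto simp: image_iff) (metis Diff_subset PowI subset_trans)
  then show ?thesis
    using assms by (meson finite_Pow_iff finite_SigmaI finite_imageI finite_subset)
qed

lemma total_curvature_le_ratio:
  assumes "finite X" "x \<in> X" "Y \<subseteq> X - {x}" "Y' \<subseteq> X - {x}" "f (Y' \<union> {x}) - f Y' \<noteq> 0"
  shows "1 - total_curvature X f \<le> (f (Y \<union> {x}) - f Y) / (f (Y' \<union> {x}) - f Y')"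
proof -
  let ?R = "{(f (Y \<union> {x}) - f Y) / (f (Y' \<union> {x}) - f Y') | x Y Y'.
      x \<in> X \<and> Y \<subseteq> X - {x} \<and> Y' \<subseteq> X - {x} \<and> f (Y' \<union> {x}) - f Y' \<noteq> 0}"
  have "(f (Y \<union> {x}) - f Y) / (f (Y' \<union> {x}) - f Y') \<in> ?R"
    using assms by blast
  then have "Min ?R \<le> (f (Y \<union> {x}) - f Y) / (f (Y' \<union> {x}) - f Y')"
    by (rule Min_le[OF finite_total_curvature_ratios[OF assms(1)]])
  then show ?thesis
    unfolding total_curvature_def by simp
qed

lemma total_curvature_gain_le:
  assumes "finite X" "nondecreasing_on X f" "x \<in> X" "Y \<subseteq> X - {x}" "Y' \<subseteq> X - {x}"
  shows "(1 - total_curvature X f) * (f (Y' \<union> {x}) - f Y') \<le> f (Y \<union> {x}) - f Y"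
proof -
  have gain_nonneg: "0 \<le> f (Z \<union> {x}) - f Z" if "Z \<subseteq> X - {x}" for Z
    using nondecreasing_onD[OF assms(2), of Z "Z \<union> {x}"] assms(3) that by auto
  show ?thesis
  proof (cases "f (Y' \<union> {x}) - f Y' = 0")
    case True
    then show ?thesis using gain_nonneg[OF assms(4)] by simp
  next
    case False
    then have "0 < f (Y' \<union> {x}) - f Y'" using gain_nonneg[OF assms(5)] by linarith
    then show ?thesis using total_curvature_le_ratio[OF assms(1,3-5) False]
      by (simp add: pos_le_divide_eq mult.commute)
  qed
qed

lemma total_curvature_bounds:
  assumes "finite X" "nondecreasing_on X f"
    and "x \<in> X" "Y \<subseteq> X - {x}" "f (Y \<union> {x}) - f Y \<noteq> 0"
  shows "0 \<le> 1 - total_curvature X f" "1 - total_curvature X f \<le> 1"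
proof -
  let ?R = "{(f (Y \<union> {x}) - f Y) / (f (Y' \<union> {x}) - f Y') | x Y Y'.
      x \<in> X \<and> Y \<subseteq> X - {x} \<and> Y' \<subseteq> X - {x} \<and> f (Y' \<union> {x}) - f Y' \<noteq> 0}"
  show "1 - total_curvature X f \<le> 1"
    using total_curvature_le_ratio[OF assms(1,3,4,4,5)] assms(5) by simp
  have nonneg: "0 \<le> r" if "r \<in> ?R" for r
  proof -
    obtain z Z Z' where r: "r = (f (Z \<union> {z}) - f Z) / (f (Z' \<union> {z}) - f Z')"
      and z: "z \<in> X" "Z \<subseteq> X - {z}" "Z' \<subseteq> X - {z}"
      using \<open>r \<in> ?R\<close> by blast
    have "f Z \<le> f (Z \<union> {z})" "f Z' \<le> f (Z' \<union> {z})"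
      using nondecreasing_onD[OF assms(2), of Z "Z \<union> {z}"]
        nondecreasing_onD[OF assms(2), of Z' "Z' \<union> {z}"] z by auto
    then show ?thesis unfolding r by simp
  qed
  have "(f (Y \<union> {x}) - f Y) / (f (Y \<union> {x}) - f Y) \<in> ?R"
    using assms(3-5) by blast
  then have "?R \<noteq> {}"
    by blast
  then have "0 \<le> Min ?R"
    using finite_total_curvature_ratios[OF assms(1)] nonneg by (intro Min.boundedI)
  then show "0 \<le> 1 - total_curvature X f"
    unfolding total_curvature_def by simp
qed

lemma curvature_gain_le:
  assumes "finite X" "submodular_on X f" "0 < f {x}" "x \<in> X" "Y \<subseteq> X - {x}"
  shows "(1 - curvature X f) * f {x} \<le> f (Y \<union> {x}) - f Y"
proof -
  have "1 - curvature X f \<le> (f X - f (X - {x})) / f {x}"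
    unfolding curvature_def using assms by simp
  then have "(1 - curvature X f) * f {x} \<le> f ((X - {x}) \<union> {x}) - f (X - {x})"
    using assms(3,4) by (simp add: le_divide_eq insert_absorb)
  also have "\<dots> \<le> f (Y \<union> {x}) - f Y"
    using assms by (intro submodular_onD) auto
  finally show ?thesis .
qed

lemma curvature_bounds:
  assumes "finite X" "X \<noteq> {}" "nondecreasing_on X f" "submodular_on X f" "f {} = 0"
    and "\<And>x. x \<in> X \<Longrightarrow> 0 < f {x}"
  shows "0 \<le> 1 - curvature X f" "1 - curvature X f \<le> 1"
proof -
  have "0 \<le> (f X - f (X - {x})) / f {x}" if "x \<in> X" for x
    using nondecreasing_onD[OF assms(3), of "X - {x}" X] assms(6)[OF that] by simp
  then show "0 \<le> 1 - curvature X f"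
    unfolding curvature_def using assms(1,2) by simp
  obtain x where x: "x \<in> X" using assms(2) by blast
  have "(1 - curvature X f) * f {x} \<le> f ({} \<union> {x}) - f {}"
    using assms x by (intro curvature_gain_le) auto
  then show "1 - curvature X f \<le> 1"
    using assms(5) assms(6)[OF x] by simp
qed

lemma eq_0_if_gains_eq_0:
  fixes f :: "'a set \<Rightarrow> real"
  assumes "finite X" "f {} = 0" and no_gain: "\<And>x Y. x \<in> X \<Longrightarrow> Y \<subseteq> X - {x} \<Longrightarrow> f (Y \<union> {x}) - f Y = 0"
    and "S \<subseteq> X"
  shows "f S = 0"
proof -
  have "finite S"
    using assms(1,4) by (rule finite_subset[rotated])
  then show ?thesis
    using \<open>S \<subseteq> X\<close>
  proof (induction S rule: finite_induct)
    case (insert x S)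
    then have "f (S \<union> {x}) - f S = 0"
      by (intro no_gain) auto
    with insert show ?case
      by simp
  qed (simp add: assms(2))
qed

lemma sum_singletons_le_gain:
  fixes f :: "'a set \<Rightarrow> real"
  assumes gain: "\<And>x Y. x \<in> X \<Longrightarrow> Y \<subseteq> X - {x} \<Longrightarrow> c * f {x} \<le> f (Y \<union> {x}) - f Y"
    and "finite S" "S \<union> T \<subseteq> X" "S \<inter> T = {}"
  shows "c * (\<Sum>x\<in>S. f {x}) \<le> f (T \<union> S) - f T"
  using assms(2-4)
proof (induction S rule: finite_induct)
  case (insert x S)
  have "c * f {x} \<le> f ((T \<union> S) \<union> {x}) - f (T \<union> S)"
    using insert by (intro gain) auto
  moreover have "c * (\<Sum>x\<in>S. f {x}) \<le> f (T \<union> S) - f T"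
    using insert by auto
  ultimately show ?case
    using insert by (simp add: algebra_simps)
qed simp

lemma gain_le_sum_singletons:
  fixes f :: "'a set \<Rightarrow> real"
  assumes gain: "\<And>x Y. x \<in> X \<Longrightarrow> Y \<subseteq> X - {x} \<Longrightarrow> c * (f (Y \<union> {x}) - f Y) \<le> f {x}"
    and "finite S" "S \<union> T \<subseteq> X" "S \<inter> T = {}"
  shows "c * (f (T \<union> S) - f T) \<le> (\<Sum>x\<in>S. f {x})"
  using assms(2-4)
proof (induction S rule: finite_induct)
  case (insert x S)
  have "c * (f ((T \<union> S) \<union> {x}) - f (T \<union> S)) \<le> f {x}"
    using insert by (intro gain) auto
  moreover have "c * (f (T \<union> S) - f T) \<le> (\<Sum>x\<in>S. f {x})"
    using insert by auto
  ultimately show ?case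
    using insert by (simp add: algebra_simps)
qed simp

lemma sum_le_sum_if_dominated:
  fixes p q :: "'a \<Rightarrow> real"
  assumes "finite A" "finite B" "card A \<le> card B"
    and dominated: "\<And>x y. x \<in> A \<Longrightarrow> y \<in> B \<Longrightarrow> p x \<le> q y"
    and nonneg: "\<And>y. y \<in> B \<Longrightarrow> 0 \<le> q y"
  shows "(\<Sum>x\<in>A. p x) \<le> (\<Sum>y\<in>B. q y)"
proof (cases "B = {}")
  case True
  then show ?thesis using assms(1,3) by simp
next
  case False
  define m where "m = Min (q ` B)"
  have m_le: "m \<le> q y" if "y \<in> B" for y
    unfolding m_def using assms(2) that by simp
  have "m \<in> q ` B"
    unfolding m_def using assms(2) False by simp
  then obtain y where "y \<in> B" "m = q y"
    by blast
  then have p_le: "p x \<le> m" if "x \<in> A" for x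
    using dominated that by simp
  have "(\<Sum>x\<in>A. p x) \<le> real (card A) * m"
    using sum_mono[OF p_le] by simp
  also have "\<dots> \<le> real (card B) * m"
    using assms(3) nonneg[OF \<open>y \<in> B\<close>] \<open>m = q y\<close> by (intro mult_right_mono) auto
  also have "\<dots> \<le> (\<Sum>y\<in>B. q y)"
    using sum_mono[OF m_le] by simp
  finally show ?thesis .
qed

section \<open>Components of the communication graph\<close>

lemma edges_eq: "edges N = {B. B \<subseteq> {..<N} \<and> card B = 2}"
  unfolding edges_def by (auto simp: card_2_iff)

lemma finite_edges: "finite (edges N)"
  unfolding edges_eq by simp

lemma card_edges: "card (edges N) = N choose 2"
  unfolding edges_eq by (simp add: n_subsets)

lemma comp_refl: "i \<in> comp L i"
  unfolding comp_def by simp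

lemma sym_edge_rel: "sym (edge_rel L)"
  unfolding edge_rel_def sym_def by (simp add: insert_commute)

lemma comp_eq: "j \<in> comp L i \<Longrightarrow> comp L j = comp L i"
  unfolding comp_def
  using sym_rtrancl[OF sym_edge_rel, of L] by (auto simp: sym_def intro: rtrancl_trans)

lemma comp_disjoint: "comp L i \<noteq> comp L j \<Longrightarrow> comp L i \<inter> comp L j = {}"
  using comp_eq by blast

lemma comp_subset:
  assumes closed: "\<And>a b. {a, b} \<in> L \<Longrightarrow> a \<in> A \<Longrightarrow> b \<in> A" and "i \<in> A"
  shows "comp L i \<subseteq> A"
proof
  fix j assume "j \<in> comp L i"
  then have "(i, j) \<in> (edge_rel L)\<^sup>*"
    unfolding comp_def by simp
  then show "j \<in> A"
    by (induction rule: rtrancl_induct) (use assms in \<open>auto simp: edge_rel_def\<close>)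
qed

lemma comp_subset_lessThan:
  assumes "L \<subseteq> edges N" "i < N"
  shows "comp L i \<subseteq> {..<N}"
proof (rule comp_subset)
  show "b \<in> {..<N}" if "{a, b} \<in> L" for a b
    using that assms(1) unfolding edges_eq by auto
qed (use assms(2) in simp)

lemma doubleton_subset_comp: "{a, b} \<in> L \<Longrightarrow> {a, b} \<subseteq> comp L a"
  unfolding comp_def edge_rel_def by auto

definition cut_edges :: "nat \<Rightarrow> nat set \<Rightarrow> nat set set" where
  "cut_edges N B = (\<lambda>(a, b). {a, b}) ` (({..<N} - B) \<times> B)"

lemma cut_edges_subset: "B \<subseteq> {..<N} \<Longrightarrow> cut_edges N B \<subseteq> edges N"
  unfolding cut_edges_def edges_def by auto

lemma card_cut_edges: "B \<subseteq> {..<N} \<Longrightarrow> card (cut_edges N B) \<le> (N - card B) * card B"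
proof -
  assume "B \<subseteq> {..<N}"
  then have "card (({..<N} - B) \<times> B) = (N - card B) * card B"
    by (simp add: card_cartesian_product card_Diff_subset finite_subset)
  then show ?thesis
    unfolding cut_edges_def by (metis card_image_le finite_SigmaI finite_Diff finite_lessThan
      finite_subset \<open>B \<subseteq> {..<N}\<close>)
qed

lemma comp_minus_cut_edges:
  assumes "B \<subseteq> {..<N}" "i < N"
  shows "comp (edges N - cut_edges N B) i \<subseteq> (if i \<in> B then B else {..<N} - B)"
proof (rule comp_subset)
  fix a b assume ab: "{a, b} \<in> edges N - cut_edges N B" "a \<in> (if i \<in> B then B else {..<N} - B)"
  then have "b < N" "{a, b} \<notin> cut_edges N B" "{b, a} \<notin> cut_edges N B"
    unfolding edges_eq by (auto simp: insert_commute)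
  then show "b \<in> (if i \<in> B then B else {..<N} - B)"
    using ab(2) assms(1) unfolding cut_edges_def by (auto split: if_splits)
qed (use assms in auto)

section \<open>The CAA number\<close>

lemma choose_two_add: "(m + n) choose 2 = (m choose 2) + (n choose 2) + m * n"
  by (induction n) (auto simp: numeral_2_eq_2)

lemma choose_two_exchange:
  assumes "m \<le> k" "n \<le> k" "k \<le> m + n"
  shows "(m choose 2) + (n choose 2) \<le> (k choose 2) + ((m + n - k) choose 2)"
proof -
  define l where "l = m + n - k"
  have "int k * int l \<le> int m * int n"
  proof -
    have l: "int l = int m + int n - int k"
      unfolding l_def using assms(3) by simp
    have "0 \<le> (int k - int m) * (int k - int n)"
      using assms(1,2) by simp
    then show ?thesis
      unfolding l by (simp add: algebra_simps)
  qed
  then have "k * l \<le> m * n"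
    by (metis of_nat_le_iff of_nat_mult)
  moreover have "(m choose 2) + (n choose 2) + m * n = (k choose 2) + (l choose 2) + k * l"
    using choose_two_add[of m n] choose_two_add[of k l] assms unfolding l_def by simp
  ultimately show ?thesis
    unfolding l_def by linarith
qed

text \<open>caa_ebar N n is the largest number of links of a graph on N robots whose components have
  at most n robots: N div n cliques of size n and one clique on the remaining robots.\<close>

lemma caa_ebar_eq: "caa_ebar M n = M div n * (n choose 2) + (M mod n choose 2)"
  unfolding caa_ebar_def choose_two ..

lemma caa_ebar_self: "caa_ebar n n = n choose 2"
  by (cases "n = 0") (simp_all add: caa_ebar_eq)

lemma caa_ebar_shift: "0 < n \<Longrightarrow> n \<le> M \<Longrightarrow> caa_ebar M n = (n choose 2) + caa_ebar (M - n) n"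
  unfolding caa_ebar_eq by (simp add: le_div_geq le_mod_geq)

lemma caa_ebar_add_le:
  assumes "s \<le> n" "0 < n"
  shows "(s choose 2) + caa_ebar M n \<le> caa_ebar (s + M) n"
proof -
  define q r where "q = M div n" and "r = M mod n"
  have M: "M = r + q * n" and "r < n"
    unfolding q_def r_def using assms(2) by simp_all
  have div_mod: "(s + M) div n = (s + r) div n + q" "(s + M) mod n = (s + r) mod n"
    unfolding M using assms(2) by (simp_all add: add.assoc[symmetric])
  show ?thesis
  proof (cases "s + r < n")
    case True
    then show ?thesis
      unfolding caa_ebar_eq div_mod using choose_two_add[of s r]
      by (simp add: q_def[symmetric] r_def[symmetric])
  next
    case False
    then have "(s + r) div n = 1" "(s + r) mod n = s + r - n"
      using assms \<open>r < n\<close> by (simp_all add: div_if mod_if)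
    then show ?thesis
      unfolding caa_ebar_eq div_mod using choose_two_exchange[of s n r] assms \<open>r < n\<close> False
      by (simp add: q_def[symmetric] r_def[symmetric] algebra_simps)
  qed
qed

lemma sum_choose_two_le_caa_ebar:
  assumes "finite I" "\<And>i. i \<in> I \<Longrightarrow> s i \<le> n" "0 < n"
  shows "(\<Sum>i\<in>I. s i choose 2) \<le> caa_ebar (\<Sum>i\<in>I. s i) n"
  using assms
proof (induction I rule: finite_induct)
  case (insert i I)
  then have "(s i choose 2) + caa_ebar (\<Sum>i\<in>I. s i) n \<le> caa_ebar (s i + (\<Sum>i\<in>I. s i)) n"
    by (intro caa_ebar_add_le) auto
  with insert show ?case by simp
qed (simp add: caa_ebar_eq)

lemma caa_ebar_le_choose_two: "caa_ebar M n \<le> M choose 2"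
proof -
  have "q * (n choose 2) + (r choose 2) \<le> (q * n + r) choose 2" for q r
  proof (induction q)
    case (Suc q)
    then show ?case
      using choose_two_add[of n "q * n + r"] by (simp add: add.assoc)
  qed simp
  from this[of "M div n" "M mod n"] show ?thesis
    unfolding caa_ebar_eq by simp
qed

lemma card_le_caa_ebar:
  assumes L: "L \<subseteq> edges N" and "0 < n" and small: "\<And>i. i < N \<Longrightarrow> card (comp L i) \<le> n"
  shows "card L \<le> caa_ebar N n"
proof -
  define Cs where "Cs = comp L ` {..<N}"
  have Cs_sub: "C \<subseteq> {..<N}" if "C \<in> Cs" for C
    using that comp_subset_lessThan[OF L] unfolding Cs_def by auto
  then have finite_C: "finite C" if "C \<in> Cs" for C
    using that finite_subset by blast
  have "L \<subseteq> (\<Union>C\<in>Cs. {B. B \<subseteq> C \<and> card B = 2})"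
  proof
    fix e assume "e \<in> L"
    then obtain a b where "e = {a, b}" "a < N" "a \<noteq> b"
      using L unfolding edges_def by auto
    then have "card e = 2" "e \<subseteq> comp L a"
      using doubleton_subset_comp[of a b L] \<open>e \<in> L\<close> by simp_all
    moreover have "comp L a \<in> Cs"
      unfolding Cs_def using \<open>a < N\<close> by simp
    ultimately show "e \<in> (\<Union>C\<in>Cs. {B. B \<subseteq> C \<and> card B = 2})"
      by blast
  qed
  then have "card L \<le> card (\<Union>C\<in>Cs. {B. B \<subseteq> C \<and> card B = 2})"
    using finite_C unfolding Cs_def by (intro card_mono) auto
  also have "\<dots> \<le> (\<Sum>C\<in>Cs. card {B. B \<subseteq> C \<and> card B = 2})"
    unfolding Cs_def by (rule card_UN_le) simp
  also have "\<dots> = (\<Sum>C\<in>Cs. card C choose 2)"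
    using finite_C by (intro sum.cong) (auto simp: n_subsets)
  also have "\<dots> \<le> caa_ebar (\<Sum>C\<in>Cs. card C) n"
    using small \<open>0 < n\<close> unfolding Cs_def by (intro sum_choose_two_le_caa_ebar) auto
  also have "(\<Sum>C\<in>Cs. card C) = card (\<Union>Cs)"
    using finite_C comp_disjoint
    by (intro card_Union_disjoint[symmetric]) (auto simp: Cs_def pairwise_def disjnt_def)
  also have "\<Union>Cs = {..<N}"
    using Cs_sub comp_refl unfolding Cs_def by blast
  finally show ?thesis
    by simp
qed

lemma obtain_caa_least:
  assumes "1 \<le> N"
  obtains n where "caa N ac = N - n" "1 \<le> n" "n \<le> N" "(N choose 2) - ac \<le> caa_ebar N n"
    "\<And>m. 1 \<le> m \<Longrightarrow> m < n \<Longrightarrow> caa_ebar N m < (N choose 2) - ac"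
proof -
  let ?P = "\<lambda>n. 1 \<le> n \<and> (N choose 2) - ac \<le> caa_ebar N n"
  define n where "n = (LEAST n. ?P n)"
  have "?P N"
    using assms caa_ebar_self[of N] by simp
  then have "?P n" "n \<le> N"
    unfolding n_def by (rule LeastI, rule Least_le)
  moreover have "caa_ebar N m < (N choose 2) - ac" if "1 \<le> m" "m < n" for m
    using not_less_Least[of m ?P] that unfolding n_def by auto
  moreover have "caa N ac = N - n"
    unfolding caa_def n_def choose_two ..
  ultimately show ?thesis
    using that by blast
qed

lemma exists_large_comp:
  assumes "1 \<le> N" and L: "L \<subseteq> edges N" and card_L: "(N choose 2) - ac \<le> card L"
  shows "\<exists>i<N. N - caa N ac \<le> card (comp L i)"
proof -
  obtain n where n: "caa N ac = N - n" "1 \<le> n" "n \<le> N"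
    and minimal: "\<And>m. 1 \<le> m \<Longrightarrow> m < n \<Longrightarrow> caa_ebar N m < (N choose 2) - ac"
    using obtain_caa_least[OF assms(1), where ac = ac] by blast
  obtain i where "i < N" "n - 1 < card (comp L i)"
  proof (cases "n = 1")
    case True
    have "finite (comp L 0)"
      using comp_subset_lessThan[OF L, of 0] assms(1) finite_subset by auto
    then have "0 < card (comp L 0)"
      using comp_refl[of 0 L] by (auto simp: card_gt_0_iff)
    then show ?thesis
      using that[of 0] assms(1) True by simp
  next
    case False
    then have "caa_ebar N (n - 1) < card L"
      using minimal[of "n - 1"] n(2) card_L by linarith
    have "\<not> (\<forall>i<N. card (comp L i) \<le> n - 1)"
    proof
      assume "\<forall>i<N. card (comp L i) \<le> n - 1"
      then have "card L \<le> caa_ebar N (n - 1)"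
        using False n(2) by (intro card_le_caa_ebar[OF L]) auto
      then show False
        using \<open>caa_ebar N (n - 1) < card L\<close> by simp
    qed
    then show ?thesis
      using that by (auto simp: not_le)
  qed
  moreover have "N - caa N ac \<le> card (comp L i)"
    using n(1,3) \<open>n - 1 < card (comp L i)\<close> by simp
  ultimately show ?thesis
    by blast
qed

lemma caa_cut_cost_le: "1 \<le> N \<Longrightarrow> (N - caa N ac) * caa N ac \<le> ac"
proof -
  assume "1 \<le> N"
  then obtain n where n: "caa N ac = N - n" "1 \<le> n" "n \<le> N" "(N choose 2) - ac \<le> caa_ebar N n"
    using obtain_caa_least by blast
  have "caa_ebar N n = (n choose 2) + caa_ebar (N - n) n"
    using n by (intro caa_ebar_shift) auto
  also have "\<dots> \<le> (n choose 2) + ((N - n) choose 2)"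
    using caa_ebar_le_choose_two by simp
  finally have "caa_ebar N n + n * (N - n) \<le> N choose 2"
    using choose_two_add[of n "N - n"] n(3) by simp
  moreover have "N choose 2 \<le> caa_ebar N n + ac"
    using n(4) by simp
  ultimately have "n * (N - n) \<le> ac"
    by linarith
  then show ?thesis
    using n(1,3) by simp
qed

section \<open>Fused quality and optimal value\<close>

lemma sel_empty [simp]: "sel u {} = {}"
  unfolding sel_def by simp

lemma sel_insert: "sel u (insert i K) = insert (i, u i) (sel u K)"
  unfolding sel_def by simp

lemma sel_Un: "sel u (A \<union> B) = sel u A \<union> sel u B"
  unfolding sel_def by auto

lemma mem_sel: "(i, v) \<in> sel u K \<longleftrightarrow> i \<in> K \<and> v = u i"
  unfolding sel_def by auto

lemma sel_mono: "A \<subseteq> B \<Longrightarrow> sel u A \<subseteq> sel u B"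
  unfolding sel_def by auto

lemma finite_sel: "finite K \<Longrightarrow> finite (sel u K)"
  unfolding sel_def by simp

lemma sum_sel: "(\<Sum>x\<in>sel u K. h x) = (\<Sum>i\<in>K. h (i, u i))"
  unfolding sel_def by (subst sum.reindex) (auto simp: inj_on_def)

lemma sel_subset_ground:
  "K \<subseteq> {..<N} \<Longrightarrow> (\<And>i. i \<in> K \<Longrightarrow> u i \<in> U i) \<Longrightarrow> sel u K \<subseteq> ground N U"
  unfolding sel_def ground_def by auto

lemma finite_ground: "(\<And>i. i < N \<Longrightarrow> finite (U i)) \<Longrightarrow> finite (ground N U)"
  unfolding ground_def by auto

lemma comp_value_le_Phi_att: "i < N \<Longrightarrow> phi (sel u (S \<inter> comp L i)) \<le> Phi_att phi N u S L"
  unfolding Phi_att_def by (intro Max_ge) auto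

lemma Phi_att_attained:
  assumes "1 \<le> N"
  shows "\<exists>i<N. Phi_att phi N u S L = phi (sel u (S \<inter> comp L i))"
proof -
  have "Phi_att phi N u S L \<in> (\<lambda>i. phi (sel u (S \<inter> comp L i))) ` {..<N}"
    unfolding Phi_att_def using assms by (intro Max_in) (auto simp: lessThan_empty_iff)
  then show ?thesis
    by auto
qed

lemma finite_attack_values:
  "finite {Phi_att phi N u ({..<N} - As) (edges N - Ac) | As Ac. feasible_attack N as ac As Ac}"
proof (rule finite_subset)
  show "finite ((\<lambda>(As, Ac). Phi_att phi N u ({..<N} - As) (edges N - Ac)) ` (Pow {..<N} \<times> Pow (edges N)))"
    using finite_edges by simp
qed (auto simp: feasible_attack_def)

lemma worst_le_Phi_att:
  "feasible_attack N as ac As Ac \<Longrightarrow> worst phi N as ac u \<le> Phi_att phi N u ({..<N} - As) (edges N - Ac)"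
  unfolding worst_def by (intro Min_le[OF finite_attack_values]) auto

lemma opt_value_attained:
  assumes "\<And>i. i < N \<Longrightarrow> finite (U i) \<and> U i \<noteq> {}"
  obtains u' where "u' \<in> PiE {..<N} U" "opt_value phi N U as ac = worst phi N as ac u'"
proof -
  have "PiE {..<N} U \<noteq> {}" "finite (PiE {..<N} U)"
    using assms by (auto simp: PiE_eq_empty_iff intro!: finite_PiE)
  then have "opt_value phi N U as ac \<in> worst phi N as ac ` PiE {..<N} U"
    unfolding opt_value_def by (intro Max_in) auto
  then show ?thesis
    using that by blast
qed

lemma opt_value_le_comp:
  assumes "\<And>i. i < N \<Longrightarrow> finite (U i) \<and> U i \<noteq> {}" "1 \<le> N"
    and "feasible_attack N as ac As Ac"
  obtains u' i where "u' \<in> PiE {..<N} U" "i < N"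
    "opt_value phi N U as ac \<le> phi (sel u' (({..<N} - As) \<inter> comp (edges N - Ac) i))"
proof -
  obtain u' where u': "u' \<in> PiE {..<N} U" "opt_value phi N U as ac = worst phi N as ac u'"
    using opt_value_attained[OF assms(1)] .
  obtain i where "i < N"
    "Phi_att phi N u' ({..<N} - As) (edges N - Ac) = phi (sel u' (({..<N} - As) \<inter> comp (edges N - Ac) i))"
    using Phi_att_attained[OF assms(2)] by blast
  then show ?thesis
    using that[OF u'(1)] u'(2) worst_le_Phi_att[OF assms(3), of phi u'] by simp
qed

lemma opt_value_eq_0:
  assumes "\<And>i. i < N \<Longrightarrow> finite (U i) \<and> U i \<noteq> {}" "1 \<le> N"
    and zero: "\<And>u' S. u' \<in> PiE {..<N} U \<Longrightarrow> S \<subseteq> {..<N} \<Longrightarrow> phi (sel u' S) = 0"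
  shows "opt_value phi N U as ac = 0"
proof -
  obtain u' where u': "u' \<in> PiE {..<N} U" "opt_value phi N U as ac = worst phi N as ac u'"
    using opt_value_attained[OF assms(1)] .
  have "Phi_att phi N u' S L = 0" if "S \<subseteq> {..<N}" for S L
  proof -
    obtain i where "Phi_att phi N u' S L = phi (sel u' (S \<inter> comp L i))"
      using Phi_att_attained[OF assms(2)] by blast
    also have "\<dots> = 0"
      using that by (intro zero[OF u'(1)]) auto
    finally show ?thesis .
  qed
  moreover have "feasible_attack N as ac {} {}"
    unfolding feasible_attack_def by simp
  ultimately have "{Phi_att phi N u' ({..<N} - As) (edges N - Ac) | As Ac.
      feasible_attack N as ac As Ac} = {0}"
    by auto
  then show ?thesis
    unfolding u'(2) worst_def by simp
qed

section \<open>Greedy assignments\<close>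

locale greedy_assignment =
  fixes f :: "(nat \<times> 'u) set \<Rightarrow> real" and N :: nat and U :: "nat \<Rightarrow> 'u set"
    and u :: "nat \<Rightarrow> 'u" and g :: "nat list"
  assumes mono: "nondecreasing_on (ground N U) f" and norm: "f {} = 0"
    and distinct_g: "distinct g" and set_g: "set g \<subseteq> {..<N}"
    and u_in_U: "\<And>i. i \<in> set g \<Longrightarrow> u i \<in> U i"
    and greedy_choice: "\<And>k i v. k < length g \<Longrightarrow> i \<in> set g - set (take k g) \<Longrightarrow> v \<in> U i \<Longrightarrow>
        f (sel u (set (take k g)) \<union> {(i, v)}) - f (sel u (set (take k g)))
        \<le> f (sel u (set (take k g)) \<union> {(g ! k, u (g ! k))}) - f (sel u (set (take k g)))"
begin

abbreviation chosen :: "nat \<Rightarrow> nat set" where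
  "chosen k \<equiv> set (take k g)"

lemma chosen_Suc: "k < length g \<Longrightarrow> chosen (Suc k) = insert (g ! k) (chosen k)"
  by (simp add: take_Suc_conv_app_nth)

lemma nth_notin_chosen: "k < length g \<Longrightarrow> g ! k \<notin> chosen k"
  using distinct_g by (metis distinct_take id_take_nth_drop not_distinct_conv_prefix take_Suc_conv_app_nth)

lemma chosen_subset: "chosen k \<subseteq> set g"
  by (rule set_take_subset)

lemma sel_chosen_subset_ground: "sel u (chosen k) \<subseteq> ground N U"
  using chosen_subset set_g u_in_U by (intro sel_subset_ground) auto

lemma greedy_step_total_curvature:
  fixes c :: real
  assumes gain_ratio: "\<And>x Y Y'. x \<in> ground N U \<Longrightarrow> Y \<subseteq> ground N U - {x} \<Longrightarrow>
      Y' \<subseteq> ground N U - {x} \<Longrightarrow> c * (f (Y' \<union> {x}) - f Y') \<le> f (Y \<union> {x}) - f Y"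
    and "0 \<le> c" and u': "\<And>i. i \<in> set g \<Longrightarrow> u' i \<in> U i" and k: "k < length g"
    and "A' \<subseteq> sel u' (chosen k)" "A \<subseteq> sel u (chosen k)"
  shows "c\<^sup>2 * (f (A' \<union> {(g ! k, u' (g ! k))}) - f A') \<le> f (A \<union> {(g ! k, u (g ! k))}) - f A"
proof -
  define j G w x where "j = g ! k" and "G = sel u (chosen k)" and "w = (j, u' j)" and "x = (j, u j)"
  have j: "j \<in> set g" "j \<notin> chosen k"
    unfolding j_def using k nth_notin_chosen by auto
  have ground: "w \<in> ground N U" "x \<in> ground N U"
    unfolding w_def x_def ground_def using j set_g u' u_in_U by auto
  have "sel u' (chosen k) \<subseteq> ground N U - {w}" "G \<subseteq> ground N U - {w}" "G \<subseteq> ground N U - {x}"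
    unfolding G_def w_def x_def using j chosen_subset[of k] set_g u' u_in_U
    by (auto simp: sel_def ground_def)
  then have "A' \<subseteq> ground N U - {w}" "A \<subseteq> ground N U - {x}" "G \<subseteq> ground N U - {w}"
    "G \<subseteq> ground N U - {x}"
    using assms(5,6) unfolding G_def by blast+
  note gain_w = gain_ratio[OF ground(1) this(3,1)] and gain_x = gain_ratio[OF ground(2) this(2,4)]
  have "c\<^sup>2 * (f (A' \<union> {w}) - f A') = c * (c * (f (A' \<union> {w}) - f A'))"
    by (simp add: power2_eq_square)
  also have "\<dots> \<le> c * (f (G \<union> {w}) - f G)"
    using gain_w \<open>0 \<le> c\<close> by (rule mult_left_mono)
  also have "\<dots> \<le> c * (f (G \<union> {x}) - f G)"
    using greedy_choice[OF k, of j "u' j"] j u' \<open>0 \<le> c\<close>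
    unfolding G_def w_def x_def j_def by (intro mult_left_mono) simp_all
  also have "\<dots> \<le> f (A \<union> {x}) - f A"
    by (rule gain_x)
  finally show ?thesis
    unfolding w_def x_def j_def .
qed

lemma greedy_total_curvature_bound:
  fixes c :: real
  assumes gain_ratio: "\<And>x Y Y'. x \<in> ground N U \<Longrightarrow> Y \<subseteq> ground N U - {x} \<Longrightarrow>
      Y' \<subseteq> ground N U - {x} \<Longrightarrow> c * (f (Y' \<union> {x}) - f Y') \<le> f (Y \<union> {x}) - f Y"
    and "0 \<le> c" and u': "\<And>i. i \<in> set g \<Longrightarrow> u' i \<in> U i" and "K \<subseteq> set g"
  shows "c\<^sup>2 * f (sel u' K) \<le> f (sel u K)"
proof -
  have "c\<^sup>2 * f (sel u' (K \<inter> chosen k)) \<le> f (sel u (K \<inter> chosen k))" if "k \<le> length g" for k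
    using that
  proof (induction k)
    case 0
    then show ?case using norm by simp
  next
    case (Suc k)
    then have k: "k < length g" by simp
    show ?case
    proof (cases "g ! k \<in> K")
      case False
      then show ?thesis
        using Suc k unfolding chosen_Suc[OF k] by simp
    next
      case True
      then have "K \<inter> chosen (Suc k) = insert (g ! k) (K \<inter> chosen k)"
        unfolding chosen_Suc[OF k] by auto
      moreover have "c\<^sup>2 * (f (sel u' (K \<inter> chosen k) \<union> {(g ! k, u' (g ! k))}) - f (sel u' (K \<inter> chosen k)))
          \<le> f (sel u (K \<inter> chosen k) \<union> {(g ! k, u (g ! k))}) - f (sel u (K \<inter> chosen k))"
        by (rule greedy_step_total_curvature[OF gain_ratio \<open>0 \<le> c\<close> u' k]) (simp_all add: sel_mono)
      moreover have "c\<^sup>2 * f (sel u' (K \<inter> chosen k)) \<le> f (sel u (K \<inter> chosen k))"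
        using Suc k by simp
      ultimately show ?thesis
        by (simp add: sel_insert algebra_simps)
    qed
  qed
  from this[of "length g"] show ?thesis
    using \<open>K \<subseteq> set g\<close> by (simp add: Int_absorb2)
qed

definition step_gain :: "nat \<Rightarrow> real" where
  "step_gain t = f (sel u (chosen (Suc t))) - f (sel u (chosen t))"

definition changed_gain :: "(nat \<Rightarrow> 'u) \<Rightarrow> nat \<Rightarrow> real" where
  "changed_gain u' k = (\<Sum>t<k. if u' (g ! t) = u (g ! t) then 0 else step_gain t)"

lemma step_gain_eq:
  "t < length g \<Longrightarrow> step_gain t = f (sel u (chosen t) \<union> {(g ! t, u (g ! t))}) - f (sel u (chosen t))"
  unfolding step_gain_def chosen_Suc by (simp add: sel_insert)

lemma step_gain_nonneg: "0 \<le> step_gain t"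
proof -
  have "sel u (chosen t) \<subseteq> sel u (chosen (Suc t))"
    by (intro sel_mono set_take_subset_set_take) simp
  then show ?thesis
    unfolding step_gain_def
    using nondecreasing_onD[OF mono _ sel_chosen_subset_ground] by simp
qed

lemma sum_step_gain: "(\<Sum>t<k. step_gain t) = f (sel u (chosen k))"
  unfolding step_gain_def sum_lessThan_telescope[where f = "\<lambda>k. f (sel u (chosen k))"]
  by (simp add: norm)

lemma changed_gain_bounds:
  "0 \<le> changed_gain u' (length g)" "changed_gain u' (length g) \<le> f (sel u (set g))"
proof -
  show "0 \<le> changed_gain u' (length g)"
    unfolding changed_gain_def using step_gain_nonneg by (intro sum_nonneg) simp
  have "changed_gain u' (length g) \<le> (\<Sum>t<length g. step_gain t)"
    unfolding changed_gain_def using step_gain_nonneg by (intro sum_mono) simp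
  then show "changed_gain u' (length g) \<le> f (sel u (set g))"
    unfolding sum_step_gain by simp
qed

end

locale submodular_greedy_assignment = greedy_assignment +
  assumes submodular: "submodular_on (ground N U) f"
begin

lemma union_le_changed_gain:
  assumes u': "\<And>i. i \<in> set g \<Longrightarrow> u' i \<in> U i" and "k \<le> length g"
  shows "f (sel u (set g) \<union> sel u' (chosen k)) \<le> f (sel u (set g)) + changed_gain u' k"
  using \<open>k \<le> length g\<close>
proof (induction k)
  case 0
  then show ?case unfolding changed_gain_def by simp
next
  case (Suc k)
  then have k: "k < length g" by simp
  define j B where "j = g ! k" and "B = sel u (set g) \<union> sel u' (chosen k)"
  have j: "j \<in> set g" "j \<notin> chosen k"
    unfolding j_def using k nth_notin_chosen by auto
  have step: "sel u (set g) \<union> sel u' (chosen (Suc k)) = B \<union> {(j, u' j)}"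
    unfolding B_def chosen_Suc[OF k] j_def sel_insert by auto
  show ?case
  proof (cases "u' j = u j")
    case True
    then have "(j, u' j) \<in> B"
      unfolding B_def using j by (simp add: mem_sel)
    then show ?thesis
      using Suc k True unfolding step changed_gain_def j_def B_def by (simp add: insert_absorb)
  next
    case False
    have "B \<subseteq> ground N U"
      unfolding B_def using chosen_subset[of k] set_g u' u_in_U by (auto simp: sel_def ground_def)
    moreover have "sel u (chosen k) \<subseteq> B"
      unfolding B_def using chosen_subset sel_mono by blast
    moreover have "(j, u' j) \<in> ground N U"
      unfolding ground_def using j set_g u' by auto
    ultimately have "f (B \<union> {(j, u' j)}) - f B
        \<le> f (sel u (chosen k) \<union> {(j, u' j)}) - f (sel u (chosen k))"
      by (intro submodular_onD[OF submodular])
    also have "\<dots> \<le> step_gain k"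
      unfolding step_gain_eq[OF k] j_def using greedy_choice[OF k] j u' j_def by simp
    finally show ?thesis
      using Suc k False unfolding step changed_gain_def j_def B_def by simp
  qed
qed

lemma changed_gain_le_union:
  fixes \<kappa> :: real
  assumes gain: "\<And>x Y. x \<in> ground N U \<Longrightarrow> Y \<subseteq> ground N U - {x} \<Longrightarrow> \<kappa> * f {x} \<le> f (Y \<union> {x}) - f Y"
    and "0 \<le> \<kappa>" and u': "\<And>i. i \<in> set g \<Longrightarrow> u' i \<in> U i" and "k \<le> length g"
  shows "f (sel u' (set g)) + \<kappa> * changed_gain u' k \<le> f (sel u' (set g) \<union> sel u (chosen k))"
  using \<open>k \<le> length g\<close>
proof (induction k)
  case 0
  then show ?case unfolding changed_gain_def by simp
next
  case (Suc k)
  then have k: "k < length g" by simp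
  define j B where "j = g ! k" and "B = sel u' (set g) \<union> sel u (chosen k)"
  have j: "j \<in> set g" "j \<notin> chosen k"
    unfolding j_def using k nth_notin_chosen by auto
  have step: "sel u' (set g) \<union> sel u (chosen (Suc k)) = B \<union> {(j, u j)}"
    unfolding B_def chosen_Suc[OF k] j_def sel_insert by auto
  show ?case
  proof (cases "u' j = u j")
    case True
    then have "(j, u j) \<in> B"
      unfolding B_def using j by (simp add: mem_sel)
    then show ?thesis
      using Suc k True unfolding step changed_gain_def j_def B_def by (simp add: insert_absorb)
  next
    case False
    have x: "(j, u j) \<in> ground N U"
      unfolding ground_def using j set_g u_in_U by auto
    have "B \<subseteq> ground N U - {(j, u j)}"
      unfolding B_def using chosen_subset[of k] set_g u' u_in_U j False
      by (auto simp: sel_def ground_def)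
    then have "\<kappa> * f {(j, u j)} \<le> f (B \<union> {(j, u j)}) - f B"
      by (rule gain[OF x])
    moreover have "step_gain k \<le> f {(j, u j)}"
      unfolding step_gain_eq[OF k] j_def[symmetric]
      using submodular_onD[OF submodular, of "{}" "sel u (chosen k)" "(j, u j)"]
        sel_chosen_subset_ground x norm by simp
    then have "\<kappa> * step_gain k \<le> \<kappa> * f {(j, u j)}"
      using \<open>0 \<le> \<kappa>\<close> by (rule mult_left_mono)
    ultimately show ?thesis
      using Suc k False unfolding step changed_gain_def j_def B_def by (simp add: algebra_simps)
  qed
qed

lemma greedy_curvature_bound:
  fixes \<kappa> :: real
  assumes "\<And>x Y. x \<in> ground N U \<Longrightarrow> Y \<subseteq> ground N U - {x} \<Longrightarrow> \<kappa> * f {x} \<le> f (Y \<union> {x}) - f Y"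
    and "0 \<le> \<kappa>" "\<kappa> \<le> 1" and u': "\<And>i. i \<in> set g \<Longrightarrow> u' i \<in> U i"
  shows "f (sel u' (set g)) \<le> (2 - \<kappa>) * f (sel u (set g))"
proof -
  let ?G = "sel u (set g)" and ?W = "sel u' (set g)" and ?S = "changed_gain u' (length g)"
  have "f ?W + \<kappa> * ?S \<le> f (?W \<union> ?G)"
    using changed_gain_le_union[OF assms(1,2) u', of "length g"] by simp
  also have "\<dots> \<le> f ?G + ?S"
    using union_le_changed_gain[OF u', of "length g"] by (simp add: Un_commute)
  finally have "f ?W \<le> f ?G + (1 - \<kappa>) * ?S"
    by (simp add: algebra_simps)
  also have "\<dots> \<le> f ?G + (1 - \<kappa>) * f ?G"
    using changed_gain_bounds \<open>\<kappa> \<le> 1\<close> by (simp add: mult_left_mono)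
  finally show ?thesis
    by (simp add: algebra_simps)
qed

end

section \<open>Performance of RATT\<close>

lemma exists_comp_with_few_outside:
  assumes "1 \<le> N" and feasible: "feasible_attack N as ac As Ac"
  obtains i where "i < N" "card ({..<N} - ({..<N} - As) \<inter> comp (edges N - Ac) i) \<le> as + caa N ac"
proof -
  have As: "As \<subseteq> {..<N}" "card As \<le> as" and Ac: "Ac \<subseteq> edges N" "card Ac \<le> ac"
    using feasible unfolding feasible_attack_def by auto
  have "card (edges N - Ac) = (N choose 2) - card Ac"
    using Ac(1) finite_edges by (simp add: card_Diff_subset finite_subset card_edges)
  then have "(N choose 2) - ac \<le> card (edges N - Ac)"
    using Ac(2) by simp
  then obtain i where i: "i < N" "N - caa N ac \<le> card (comp (edges N - Ac) i)"
    using exists_large_comp[OF assms(1)] Ac(1) by blast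
  define C where "C = comp (edges N - Ac) i"
  have "{..<N} - ({..<N} - As) \<inter> C \<subseteq> As \<union> ({..<N} - C)"
    by auto
  then have "card ({..<N} - ({..<N} - As) \<inter> C) \<le> card (As \<union> ({..<N} - C))"
    using As(1) by (intro card_mono) (auto intro: finite_subset)
  also have "\<dots> \<le> card As + card ({..<N} - C)"
    by (rule card_Un_le)
  also have "card ({..<N} - C) = N - card C"
    unfolding C_def using comp_subset_lessThan[OF _ i(1), of "edges N - Ac"]
    by (simp add: card_Diff_subset finite_subset)
  finally show ?thesis
    using that[OF i(1)] As(2) i(2) unfolding C_def by linarith
qed

locale ratt_run = greedy_assignment phi N U u g
  for phi :: "(nat \<times> 'u) set \<Rightarrow> real" and N U u g +
  fixes as ac :: nat and Vb :: "nat set"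
  assumes N: "1 \<le> N"
    and U: "\<And>i. i < N \<Longrightarrow> finite (U i) \<and> U i \<noteq> {}"
    and nonneg: "nonneg_on (ground N U) phi"
    and bait_subset: "Vb \<subseteq> {..<N}"
    and set_g_eq: "set g = {..<N} - Vb"
    and card_bait: "card Vb = min (as + caa N ac) N" \<comment> \<open>if \<alpha> \<ge> N, every robot is bait\<close>
    and bait_in_U: "\<And>i. i \<in> Vb \<Longrightarrow> u i \<in> U i"
    and bait_best: "\<And>i v. i \<in> Vb \<Longrightarrow> v \<in> U i \<Longrightarrow> phi {(i, v)} \<le> phi {(i, u i)}"
    and bait_dominates: "\<And>i j v. i \<in> Vb \<Longrightarrow> j \<in> set g \<Longrightarrow> v \<in> U j \<Longrightarrow> phi {(j, v)} \<le> phi {(i, u i)}"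
begin

abbreviation attacked :: "nat set \<Rightarrow> nat set set \<Rightarrow> real" where
  "attacked As Ac \<equiv> Phi_att phi N u ({..<N} - As) (edges N - Ac)"

lemma finite_ground_robots: "finite (ground N U)"
  using U by (intro finite_ground) auto

lemma finite_bait: "finite Vb"
  using bait_subset by (rule finite_subset) simp

lemma assignment_in_U: "i < N \<Longrightarrow> u i \<in> U i"
  using bait_in_U u_in_U set_g_eq by blast

lemma sel_subset_ground_PiE: "K \<subseteq> {..<N} \<Longrightarrow> u' \<in> PiE {..<N} U \<Longrightarrow> sel u' K \<subseteq> ground N U"
  by (intro sel_subset_ground) auto

lemma phi_sel_nonneg: "K \<subseteq> {..<N} \<Longrightarrow> (\<And>i. i \<in> K \<Longrightarrow> u' i \<in> U i) \<Longrightarrow> 0 \<le> phi (sel u' K)"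
  using nonneg_onD[OF nonneg sel_subset_ground] .

lemma set_g_empty_if_all_bait: "\<not> as + caa N ac < N \<Longrightarrow> set g = {}"
  using card_bait bait_subset set_g_eq card_subset_eq[of "{..<N}" Vb] by auto

lemma singleton_le_attacked:
  assumes "j < N" "j \<notin> As"
  shows "phi {(j, u j)} \<le> attacked As Ac"
proof -
  have "{(j, u j)} \<subseteq> sel u (({..<N} - As) \<inter> comp (edges N - Ac) j)"
    using assms comp_refl[of j] by (auto simp: mem_sel)
  moreover have "sel u (({..<N} - As) \<inter> comp (edges N - Ac) j) \<subseteq> ground N U"
    using assignment_in_U by (intro sel_subset_ground) auto
  ultimately have "phi {(j, u j)} \<le> phi (sel u (({..<N} - As) \<inter> comp (edges N - Ac) j))"
    by (rule nondecreasing_onD[OF mono])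
  also have "\<dots> \<le> attacked As Ac"
    using assms(1) by (rule comp_value_le_Phi_att)
  finally show ?thesis .
qed

lemma attacked_nonneg: "0 \<le> attacked As Ac"
proof -
  have "0 \<le> phi (sel u (({..<N} - As) \<inter> comp (edges N - Ac) 0))"
    using assignment_in_U by (intro nonneg_onD[OF nonneg] sel_subset_ground) auto
  also have "\<dots> \<le> attacked As Ac"
    using N by (intro comp_value_le_Phi_att) simp
  finally show ?thesis .
qed

lemma sum_bait_singletons_le_attacked:
  assumes "u' \<in> PiE {..<N} U" "Z \<subseteq> Vb - As"
  shows "(\<Sum>j\<in>Z. phi {(j, u' j)}) \<le> real (card Z) * attacked As Ac"
proof (rule sum_bounded_above)
  fix j assume "j \<in> Z"
  then have j: "j \<in> Vb" "j < N" "j \<notin> As"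
    using assms(2) bait_subset by auto
  then have "phi {(j, u' j)} \<le> phi {(j, u j)}"
    using assms(1) by (intro bait_best) auto
  also have "\<dots> \<le> attacked As Ac"
    using j by (intro singleton_le_attacked)
  finally show "phi {(j, u' j)} \<le> attacked As Ac" .
qed

lemma bait_part_le_attacked:
  assumes gain: "\<And>x Y. x \<in> ground N U \<Longrightarrow> Y \<subseteq> ground N U - {x} \<Longrightarrow> c * (phi (Y \<union> {x}) - phi Y) \<le> phi {x}"
    and u': "u' \<in> PiE {..<N} U" and Z: "Z \<subseteq> Vb - As"
  shows "c * phi (sel u' Z) \<le> real (card Z) * attacked As Ac"
proof -
  have "finite Z"
    using Z finite_bait by (meson Diff_subset rev_finite_subset subset_trans)
  have "sel u' Z \<union> {} \<subseteq> ground N U"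
    using sel_subset_ground_PiE[OF _ u', of Z] Z bait_subset by auto
  then have "c * (phi ({} \<union> sel u' Z) - phi {}) \<le> (\<Sum>x\<in>sel u' Z. phi {x})"
    by (intro gain_le_sum_singletons[OF gain finite_sel[OF \<open>finite Z\<close>]]) auto
  also have "\<dots> \<le> real (card Z) * attacked As Ac"
    unfolding sum_sel using sum_bait_singletons_le_attacked[OF u' Z] .
  finally show ?thesis
    using norm by simp
qed

lemma exists_isolating_attack:
  assumes "As \<subseteq> {..<N}" "card As \<le> as"
  obtains As' Ac' where "feasible_attack N as ac As' Ac'"
    "\<And>i. i < N \<Longrightarrow> ({..<N} - As') \<inter> comp (edges N - Ac') i \<subseteq> set g
      \<or> ({..<N} - As') \<inter> comp (edges N - Ac') i \<subseteq> Vb - As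
        \<and> card (({..<N} - As') \<inter> comp (edges N - Ac') i) \<le> caa N ac"
proof -
  have "finite As"
    using assms(1) by (rule finite_subset) simp
  then have "card (As \<inter> Vb) \<le> min as (card Vb)"
    using assms(2) card_mono[OF finite_bait, of "As \<inter> Vb"] card_mono[of As "As \<inter> Vb"] by auto
  then obtain As' where As': "As \<inter> Vb \<subseteq> As'" "As' \<subseteq> Vb" "card As' = min as (card Vb)"
    using exists_subset_between[of "As \<inter> Vb" "min as (card Vb)" Vb] finite_bait by auto
  define B where "B = (if as + caa N ac < N then Vb - As' else {..<N})"
    \<comment> \<open>if every robot is bait, no link needs to be cut\<close>
  have B: "B \<subseteq> {..<N}" "B - As' = Vb - As'" "{..<N} - B - As' \<subseteq> set g"
    unfolding B_def using bait_subset set_g_empty_if_all_bait set_g_eq by auto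
  have "finite As'"
    using As'(2) finite_bait by (rule finite_subset)
  then have card_bait_rest: "card (Vb - As') \<le> caa N ac"
    using As' card_bait by (simp add: card_Diff_subset)
  have "card (cut_edges N B) \<le> ac"
  proof (cases "as + caa N ac < N")
    case True
    then have "card B = caa N ac"
      unfolding B_def using As' card_bait \<open>finite As'\<close> by (simp add: card_Diff_subset)
    then show ?thesis
      using card_cut_edges[OF B(1)] caa_cut_cost_le[OF N, of ac] by simp
  qed (use card_cut_edges[OF B(1)] B_def in simp)
  then have "feasible_attack N as ac As' (cut_edges N B)"
    unfolding feasible_attack_def using As' bait_subset cut_edges_subset[OF B(1)] by auto
  then show ?thesis
  proof (rule that)
    fix i assume "i < N"
    define C where "C = comp (edges N - cut_edges N B) i"
    have "C \<subseteq> B \<or> C \<subseteq> {..<N} - B"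
      unfolding C_def using comp_minus_cut_edges[OF B(1) \<open>i < N\<close>] by (auto split: if_splits)
    then show "({..<N} - As') \<inter> C \<subseteq> set g
      \<or> ({..<N} - As') \<inter> C \<subseteq> Vb - As \<and> card (({..<N} - As') \<inter> C) \<le> caa N ac"
    proof
      assume "C \<subseteq> B"
      then have "({..<N} - As') \<inter> C \<subseteq> Vb - As'"
        using B(2) by blast
      moreover have "Vb - As' \<subseteq> Vb - As"
        using As'(1) by auto
      ultimately show ?thesis
        using card_bait_rest card_mono[OF finite_Diff[OF finite_bait]] by (meson order_trans)
    next
      assume "C \<subseteq> {..<N} - B"
      then show ?thesis
        using B(3) by blast
    qed
  qed
qed

lemma large_comp_decomposition:
  assumes feasible: "feasible_attack N as ac As Ac" and small: "as + caa N ac < N"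
  obtains K Sb where "K \<subseteq> set g" "Sb \<subseteq> Vb" "phi (sel u (K \<union> Sb)) \<le> attacked As Ac"
    "\<And>u'. (\<And>i. i \<in> set g \<Longrightarrow> u' i \<in> U i) \<Longrightarrow>
      (\<Sum>j\<in>set g - K. phi {(j, u' j)}) \<le> (\<Sum>i\<in>Sb. phi {(i, u i)})"
proof -
  obtain i where "i < N" and outside: "card ({..<N} - ({..<N} - As) \<inter> comp (edges N - Ac) i) \<le> as + caa N ac"
    using exists_comp_with_few_outside[OF N feasible] .
  define T where "T = ({..<N} - As) \<inter> comp (edges N - Ac) i"
  define K Sb where "K = set g \<inter> T" and "Sb = Vb \<inter> T"
  have "{..<N} - T = (set g - K) \<union> (Vb - Sb)" "(set g - K) \<inter> (Vb - Sb) = {}"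
    unfolding K_def Sb_def using set_g_eq bait_subset by auto
  then have "card ({..<N} - T) = card (set g - K) + card (Vb - Sb)"
    using finite_bait by (simp add: card_Un_disjoint)
  moreover have "card Vb = card Sb + card (Vb - Sb)"
  proof -
    have "Vb - Sb = Vb - T"
      unfolding Sb_def by auto
    then show ?thesis
      using card_Int_Diff[OF finite_bait, of T] unfolding Sb_def by simp
  qed
  ultimately have card_le: "card (set g - K) \<le> card Sb"
    using outside card_bait small unfolding T_def by simp
  have "K \<union> Sb = T"
    unfolding K_def Sb_def T_def using set_g_eq by auto
  then have "phi (sel u (K \<union> Sb)) \<le> attacked As Ac"
    unfolding T_def using \<open>i < N\<close> by (simp add: comp_value_le_Phi_att)
  moreover have "(\<Sum>j\<in>set g - K. phi {(j, u' j)}) \<le> (\<Sum>i\<in>Sb. phi {(i, u i)})"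
    if u': "\<And>i. i \<in> set g \<Longrightarrow> u' i \<in> U i" for u'
  proof (rule sum_le_sum_if_dominated)
    show "finite Sb"
      unfolding Sb_def using finite_bait by simp
    show "phi {(j, u' j)} \<le> phi {(i, u i)}" if "j \<in> set g - K" "i \<in> Sb" for j i
      using that u' set_g_eq unfolding Sb_def by (intro bait_dominates) auto
    show "0 \<le> phi {(i, u i)}" if "i \<in> Sb" for i
      using that bait_subset assignment_in_U unfolding Sb_def
      by (intro nonneg_onD[OF nonneg]) (auto simp: ground_def)
  qed (use card_le in auto)
  ultimately show ?thesis
    using that[of K Sb] unfolding K_def Sb_def by blast
qed

lemma small_bait_comp_le_attacked:
  fixes b c :: real
  assumes "0 \<le> b" "real (caa N ac) * b \<le> c"
    and Z: "Z \<subseteq> Vb - As" "card Z \<le> caa N ac" and u': "u' \<in> PiE {..<N} U"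
    and bait_part: "c * phi (sel u' Z) \<le> real (card Z) * attacked As Ac"
  shows "b * phi (sel u' Z) \<le> attacked As Ac"
proof (cases "Z = {}")
  case True
  then show ?thesis using norm attacked_nonneg by simp
next
  case False
  then have "0 < card Z"
    using Z(1) finite_bait by (meson card_gt_0_iff finite_Diff rev_finite_subset)
  have Z_nonneg: "0 \<le> phi (sel u' Z)"
    using Z(1) bait_subset u' by (intro phi_sel_nonneg) auto
  have "real (card Z) * (b * phi (sel u' Z)) \<le> real (caa N ac) * b * phi (sel u' Z)"
    using Z(2) \<open>0 \<le> b\<close> Z_nonneg by (simp add: mult_right_mono mult.assoc)
  also have "\<dots> \<le> c * phi (sel u' Z)"
    using assms(2) Z_nonneg by (rule mult_right_mono)
  also have "\<dots> \<le> real (card Z) * attacked As Ac"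
    by (rule bait_part)
  finally show ?thesis
    using \<open>0 < card Z\<close> by simp
qed

lemma opt_value_le_attacked:
  fixes \<beta> \<gamma> c :: real
  assumes feasible: "feasible_attack N as ac As Ac" and "0 \<le> \<beta>" "0 \<le> \<gamma>" "\<gamma> \<le> c"
    and greedy_part: "\<And>u'. u' \<in> PiE {..<N} U \<Longrightarrow> \<beta> * phi (sel u' (set g)) \<le> attacked As Ac"
    and bait_part: "\<And>u' Z. u' \<in> PiE {..<N} U \<Longrightarrow> Z \<subseteq> Vb - As \<Longrightarrow>
      c * phi (sel u' Z) \<le> real (card Z) * attacked As Ac"
  shows "(if real (caa N ac) = 0 then \<beta> else min \<beta> (\<gamma> / real (caa N ac))) * opt_value phi N U as ac
    \<le> attacked As Ac"
proof -
  define b where "b = (if real (caa N ac) = 0 then \<beta> else min \<beta> (\<gamma> / real (caa N ac)))"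
  have b: "0 \<le> b" "b \<le> \<beta>" "real (caa N ac) * b \<le> c"
    unfolding b_def using assms(2-4) by (auto simp: min_def field_simps)
  obtain As' Ac' where feasible': "feasible_attack N as ac As' Ac'"
    and isolated: "\<And>i. i < N \<Longrightarrow> ({..<N} - As') \<inter> comp (edges N - Ac') i \<subseteq> set g
      \<or> ({..<N} - As') \<inter> comp (edges N - Ac') i \<subseteq> Vb - As
        \<and> card (({..<N} - As') \<inter> comp (edges N - Ac') i) \<le> caa N ac"
    using exists_isolating_attack feasible unfolding feasible_attack_def by blast
  obtain u' i where u': "u' \<in> PiE {..<N} U" and "i < N"
    and opt: "opt_value phi N U as ac \<le> phi (sel u' (({..<N} - As') \<inter> comp (edges N - Ac') i))"
    using opt_value_le_comp[OF U N feasible'] .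
  define Z where "Z = ({..<N} - As') \<inter> comp (edges N - Ac') i"
  have "b * phi (sel u' Z) \<le> attacked As Ac"
  proof (cases "Z \<subseteq> set g")
    case True
    then have "phi (sel u' Z) \<le> phi (sel u' (set g))"
      using set_g u' by (intro nondecreasing_onD[OF mono] sel_mono sel_subset_ground_PiE) auto
    moreover have "0 \<le> phi (sel u' Z)"
      unfolding Z_def using u' by (intro phi_sel_nonneg) auto
    ultimately have "b * phi (sel u' Z) \<le> \<beta> * phi (sel u' (set g))"
      using b by (meson mult_mono order_trans)
    then show ?thesis
      using greedy_part[OF u'] by simp
  next
    case False
    then have Z: "Z \<subseteq> Vb - As" "card Z \<le> caa N ac"
      using isolated[OF \<open>i < N\<close>] unfolding Z_def by auto
    show ?thesis
      by (rule small_bait_comp_le_attacked[OF b(1,3) Z u' bait_part[OF u' Z(1)]])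
  qed
  then show ?thesis
    using opt b(1) unfolding Z_def b_def[symmetric] by (meson mult_left_mono order_trans)
qed

lemma greedy_gain_le_sum_singletons:
  fixes c :: real
  assumes gain: "\<And>x Y. x \<in> ground N U \<Longrightarrow> Y \<subseteq> ground N U - {x} \<Longrightarrow> c * (phi (Y \<union> {x}) - phi Y) \<le> phi {x}"
    and "K \<subseteq> set g" and u': "\<And>i. i \<in> set g \<Longrightarrow> u' i \<in> U i"
  shows "c * (phi (sel u' (set g)) - phi (sel u' K)) \<le> (\<Sum>j\<in>set g - K. phi {(j, u' j)})"
proof -
  have "K \<union> (set g - K) = set g"
    using assms(2) by auto
  then have union: "sel u' K \<union> sel u' (set g - K) = sel u' (set g)"
    by (metis sel_Un)
  have "sel u' (set g) \<subseteq> ground N U"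
    using set_g u' by (intro sel_subset_ground) auto
  then have "sel u' (set g - K) \<union> sel u' K \<subseteq> ground N U" "sel u' (set g - K) \<inter> sel u' K = {}"
    using union by (auto simp: mem_sel)
  from gain_le_sum_singletons[OF gain finite_sel[OF finite_Diff[OF finite_set]] this]
  show ?thesis
    unfolding union sum_sel .
qed

lemma sum_bait_singletons_le_gain:
  fixes c :: real
  assumes gain: "\<And>x Y. x \<in> ground N U \<Longrightarrow> Y \<subseteq> ground N U - {x} \<Longrightarrow> c * phi {x} \<le> phi (Y \<union> {x}) - phi Y"
    and "K \<subseteq> set g" "Sb \<subseteq> Vb"
  shows "c * (\<Sum>i\<in>Sb. phi {(i, u i)}) \<le> phi (sel u (K \<union> Sb)) - phi (sel u K)"
proof -
  have "sel u (K \<union> Sb) \<subseteq> ground N U"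
    using assms(2,3) set_g bait_subset assignment_in_U by (intro sel_subset_ground) auto
  moreover have "K \<inter> Sb = {}"
    using assms(2,3) set_g_eq by auto
  ultimately have "sel u Sb \<union> sel u K \<subseteq> ground N U" "sel u Sb \<inter> sel u K = {}"
    by (auto simp: sel_Un mem_sel)
  from sum_singletons_le_gain[OF gain finite_sel[OF finite_subset[OF \<open>Sb \<subseteq> Vb\<close> finite_bait]] this]
  show ?thesis
    unfolding sum_sel sel_Un .
qed

lemma greedy_part_le_attacked_total_curvature:
  fixes c :: real
  assumes feasible: "feasible_attack N as ac As Ac"
    and gain_ratio: "\<And>x Y Y'. x \<in> ground N U \<Longrightarrow> Y \<subseteq> ground N U - {x} \<Longrightarrow>
      Y' \<subseteq> ground N U - {x} \<Longrightarrow> c * (phi (Y' \<union> {x}) - phi Y') \<le> phi (Y \<union> {x}) - phi Y"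
    and "0 \<le> c" "c \<le> 1" and u': "u' \<in> PiE {..<N} U"
  shows "c ^ 3 * phi (sel u' (set g)) \<le> attacked As Ac"
proof (cases "as + caa N ac < N")
  case False
  then show ?thesis
    using set_g_empty_if_all_bait norm attacked_nonneg by simp
next
  case True
  obtain K Sb where K: "K \<subseteq> set g" and Sb: "Sb \<subseteq> Vb"
    and comp_value: "phi (sel u (K \<union> Sb)) \<le> attacked As Ac"
    and dominated: "\<And>u'. (\<And>i. i \<in> set g \<Longrightarrow> u' i \<in> U i) \<Longrightarrow>
      (\<Sum>j\<in>set g - K. phi {(j, u' j)}) \<le> (\<Sum>i\<in>Sb. phi {(i, u i)})"
    using large_comp_decomposition[OF feasible True] by blast
  have u'_g: "u' i \<in> U i" if "i \<in> set g" for i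
    using u' set_g that by auto
  have "c\<^sup>2 * phi {x} \<le> phi (Y \<union> {x}) - phi Y" if "x \<in> ground N U" "Y \<subseteq> ground N U - {x}" for x Y
  proof -
    have "c\<^sup>2 * phi {x} = c * (c * phi {x})"
      by (simp add: power2_eq_square)
    also have "\<dots> \<le> c * (phi (Y \<union> {x}) - phi Y)"
      using gain_ratio[OF that, of "{}"] that(1) norm \<open>0 \<le> c\<close> by (intro mult_left_mono) simp_all
    also have "\<dots> \<le> phi (Y \<union> {x}) - phi Y"
      using nondecreasing_onD[OF mono, of Y "Y \<union> {x}"] that \<open>0 \<le> c\<close> \<open>c \<le> 1\<close>
      by (intro mult_left_le_one_le) auto
    finally show ?thesis .
  qed
  note bait_comp = sum_bait_singletons_le_gain[OF this K Sb]
  have gain_le_singleton: "c * (phi (Y \<union> {x}) - phi Y) \<le> phi {x}"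
    if "x \<in> ground N U" "Y \<subseteq> ground N U - {x}" for x Y
    using gain_ratio[OF that(1) _ that(2), of "{}"] that(1) norm by simp
  note greedy_rest = greedy_gain_le_sum_singletons[OF this K u'_g]
  have greedy_comp: "c\<^sup>2 * phi (sel u' K) \<le> phi (sel u K)"
    by (rule greedy_total_curvature_bound[OF gain_ratio \<open>0 \<le> c\<close> u'_g K])
  have "0 \<le> phi (sel u K)"
    using K set_g assignment_in_U by (intro phi_sel_nonneg) auto
  have "c ^ 3 * phi (sel u' (set g))
      = c\<^sup>2 * (c * (phi (sel u' (set g)) - phi (sel u' K))) + c * (c\<^sup>2 * phi (sel u' K))"
    by (simp add: algebra_simps power2_eq_square power3_eq_cube)
  also have "\<dots> \<le> c\<^sup>2 * (\<Sum>i\<in>Sb. phi {(i, u i)}) + c * phi (sel u K)"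
    using greedy_rest dominated[OF u'_g] greedy_comp \<open>0 \<le> c\<close>
    by (intro add_mono mult_left_mono) auto
  also have "\<dots> \<le> phi (sel u (K \<union> Sb))"
    using bait_comp \<open>0 \<le> phi (sel u K)\<close> \<open>0 \<le> c\<close> \<open>c \<le> 1\<close> mult_left_le_one_le[of "phi (sel u K)" c]
    by simp
  finally show ?thesis
    using comp_value by simp
qed

lemma greedy_part_le_attacked_curvature:
  fixes \<kappa> :: real
  assumes feasible: "feasible_attack N as ac As Ac"
    and submodular: "submodular_on (ground N U) phi"
    and gain: "\<And>x Y. x \<in> ground N U \<Longrightarrow> Y \<subseteq> ground N U - {x} \<Longrightarrow> \<kappa> * phi {x} \<le> phi (Y \<union> {x}) - phi Y"
    and "0 \<le> \<kappa>" "\<kappa> \<le> 1"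
  shows "\<kappa> * phi (sel u (set g)) \<le> attacked As Ac"
proof (cases "as + caa N ac < N")
  case False
  then show ?thesis
    using set_g_empty_if_all_bait norm attacked_nonneg by simp
next
  case True
  obtain K Sb where K: "K \<subseteq> set g" and Sb: "Sb \<subseteq> Vb"
    and comp_value: "phi (sel u (K \<union> Sb)) \<le> attacked As Ac"
    and dominated: "\<And>u'. (\<And>i. i \<in> set g \<Longrightarrow> u' i \<in> U i) \<Longrightarrow>
      (\<Sum>j\<in>set g - K. phi {(j, u' j)}) \<le> (\<Sum>i\<in>Sb. phi {(i, u i)})"
    using large_comp_decomposition[OF feasible True] by blast
  have "1 * (phi (Y \<union> {x}) - phi Y) \<le> phi {x}"
    if "x \<in> ground N U" "Y \<subseteq> ground N U - {x}" for x Y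
    using submodular_onD[OF submodular, of "{}" Y x] that norm by auto
  note greedy_rest = greedy_gain_le_sum_singletons[OF this K u_in_U]
  have "0 \<le> phi (sel u K)"
    using K set_g assignment_in_U by (intro phi_sel_nonneg) auto
  have "\<kappa> * phi (sel u (set g)) = \<kappa> * (phi (sel u (set g)) - phi (sel u K)) + \<kappa> * phi (sel u K)"
    by (simp add: algebra_simps)
  also have "\<dots> \<le> \<kappa> * (\<Sum>i\<in>Sb. phi {(i, u i)}) + phi (sel u K)"
    using greedy_rest dominated[OF u_in_U] \<open>0 \<le> \<kappa>\<close> \<open>\<kappa> \<le> 1\<close> \<open>0 \<le> phi (sel u K)\<close>
    by (intro add_mono mult_left_mono) (auto simp: mult_left_le_one_le)
  also have "\<dots> \<le> phi (sel u (K \<union> Sb))"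
    using sum_bait_singletons_le_gain[OF gain K Sb] by simp
  finally show ?thesis
    using comp_value by simp
qed

lemma total_curvature_guarantee:
  assumes feasible: "feasible_attack N as ac As Ac"
  shows "(let c = total_curvature (ground N U) phi; a = real (caa N ac) in
      if a = 0 then (1 - c) ^ 3 else min ((1 - c) ^ 3) ((1 - c) ^ 2 / a))
    * opt_value phi N U as ac \<le> attacked As Ac"
proof (cases "\<exists>x Y. x \<in> ground N U \<and> Y \<subseteq> ground N U - {x} \<and> phi (Y \<union> {x}) - phi Y \<noteq> 0")
  case False
  \<comment> \<open>then total_curvature is Min {}, which is unspecified; but phi and the optimum vanish\<close>
  have zero: "phi S = 0" if "S \<subseteq> ground N U" for S
  proof (rule eq_0_if_gains_eq_0[where X = "ground N U"])
    show "phi (Y \<union> {x}) - phi Y = 0" if "x \<in> ground N U" "Y \<subseteq> ground N U - {x}" for x Y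
      using False that by blast
  qed (use finite_ground_robots norm that in simp_all)
  have "opt_value phi N U as ac = 0"
  proof (rule opt_value_eq_0[OF U N])
    show "phi (sel u' S) = 0" if "u' \<in> PiE {..<N} U" "S \<subseteq> {..<N}" for u' S
      by (rule zero[OF sel_subset_ground_PiE[OF that(2,1)]])
  qed
  then show ?thesis
    using attacked_nonneg by simp
next
  case True
  define c where "c = 1 - total_curvature (ground N U) phi"
  have c: "0 \<le> c" "c \<le> 1"
    unfolding c_def using total_curvature_bounds[OF finite_ground_robots mono] True by blast+
  have gain_ratio: "c * (phi (Y' \<union> {x}) - phi Y') \<le> phi (Y \<union> {x}) - phi Y"
    if "x \<in> ground N U" "Y \<subseteq> ground N U - {x}" "Y' \<subseteq> ground N U - {x}" for x Y Y'
    unfolding c_def using total_curvature_gain_le[OF finite_ground_robots mono that] .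
  have "(if real (caa N ac) = 0 then c ^ 3 else min (c ^ 3) (c\<^sup>2 / real (caa N ac)))
      * opt_value phi N U as ac \<le> attacked As Ac"
  proof (rule opt_value_le_attacked[OF feasible])
    show "0 \<le> c ^ 3" "0 \<le> c\<^sup>2" "c\<^sup>2 \<le> c"
      using c by (simp_all add: power2_eq_square mult_left_le_one_le)
    show "c ^ 3 * phi (sel u' (set g)) \<le> attacked As Ac" if "u' \<in> PiE {..<N} U" for u'
      by (rule greedy_part_le_attacked_total_curvature[OF feasible gain_ratio c that])
    show "c * phi (sel u' Z) \<le> real (card Z) * attacked As Ac"
      if "u' \<in> PiE {..<N} U" "Z \<subseteq> Vb - As" for u' Z
      using gain_ratio[of _ "{}"] norm by (intro bait_part_le_attacked[OF _ that]) auto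
  qed
  then show ?thesis
    unfolding c_def Let_def .
qed

lemma curvature_guarantee:
  assumes feasible: "feasible_attack N as ac As Ac" and submodular: "submodular_on (ground N U) phi"
    and singletons: "\<forall>x\<in>ground N U. phi {x} \<noteq> 0"
  shows "(let k = curvature (ground N U) phi; a = real (caa N ac) in
      if a = 0 then (1 - k) / (1 + k) else min ((1 - k) / (1 + k)) ((1 - k) / a))
    * opt_value phi N U as ac \<le> attacked As Ac"
proof -
  interpret submodular_greedy_assignment phi N U u g
    by unfold_locales (rule submodular)
  have pos: "0 < phi {x}" if "x \<in> ground N U" for x
    using nonneg_onD[OF nonneg, of "{x}"] singletons that by force
  obtain v where "v \<in> U 0"
    using U N by fastforce
  then have "(0, v) \<in> ground N U"
    unfolding ground_def using N by simp
  then have "ground N U \<noteq> {}"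
    by blast
  define \<kappa> where "\<kappa> = 1 - curvature (ground N U) phi"
  have \<kappa>: "0 \<le> \<kappa>" "\<kappa> \<le> 1"
    unfolding \<kappa>_def using curvature_bounds[OF finite_ground_robots \<open>ground N U \<noteq> {}\<close> mono submodular norm pos]
    by blast+
  have gain: "\<kappa> * phi {x} \<le> phi (Y \<union> {x}) - phi Y" if "x \<in> ground N U" "Y \<subseteq> ground N U - {x}" for x Y
    unfolding \<kappa>_def using curvature_gain_le[OF finite_ground_robots submodular pos[OF that(1)] that] .
  have "(if real (caa N ac) = 0 then \<kappa> / (2 - \<kappa>) else min (\<kappa> / (2 - \<kappa>)) (\<kappa> / real (caa N ac)))
      * opt_value phi N U as ac \<le> attacked As Ac"
  proof (rule opt_value_le_attacked[OF feasible, where c = 1])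
    show "0 \<le> \<kappa> / (2 - \<kappa>)" "0 \<le> \<kappa>" "\<kappa> \<le> 1"
      using \<kappa> by simp_all
    show "\<kappa> / (2 - \<kappa>) * phi (sel u' (set g)) \<le> attacked As Ac" if "u' \<in> PiE {..<N} U" for u'
    proof -
      have "\<kappa> / (2 - \<kappa>) * phi (sel u' (set g)) \<le> \<kappa> / (2 - \<kappa>) * ((2 - \<kappa>) * phi (sel u (set g)))"
        using greedy_curvature_bound[OF gain \<kappa>, of u'] that set_g \<kappa>
        by (intro mult_left_mono) auto
      also have "\<dots> = \<kappa> * phi (sel u (set g))"
        using \<kappa> by simp
      also have "\<dots> \<le> attacked As Ac"
        by (rule greedy_part_le_attacked_curvature[OF feasible submodular gain \<kappa>])
      finally show ?thesis .
    qed
    show "1 * phi (sel u' Z) \<le> real (card Z) * attacked As Ac"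
      if "u' \<in> PiE {..<N} U" "Z \<subseteq> Vb - As" for u' Z
      using submodular_onD[OF submodular, of "{}"] norm by (intro bait_part_le_attacked[OF _ that]) auto
  qed
  moreover have "1 - curvature (ground N U) phi = \<kappa>" "1 + curvature (ground N U) phi = 2 - \<kappa>"
    unfolding \<kappa>_def by simp_all
  ultimately show ?thesis
    unfolding Let_def by presburger
qed

end

lemma ratt_run_if_ratt_output:
  assumes ratt: "ratt_output phi N U as ac u" and N: "1 \<le> N"
    and U: "\<And>i. i < N \<Longrightarrow> finite (U i) \<and> U i \<noteq> {}"
    and mono: "nondecreasing_on (ground N U) phi" and norm: "phi {} = 0"
    and nonneg: "nonneg_on (ground N U) phi"
  obtains g Vb where "ratt_run phi N U u g as ac Vb"
proof (cases "as + caa N ac < N")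
  case True
  then obtain Vb g where Vb: "Vb \<subseteq> {..<N}" "card Vb = as + caa N ac"
    and bait: "\<forall>i\<in>Vb. u i \<in> U i \<and> (\<forall>v\<in>U i. phi {(i, v)} \<le> phi {(i, u i)})"
    and dominates: "\<forall>i\<in>Vb. \<forall>j\<in>{..<N} - Vb. \<forall>v\<in>U j. phi {(j, v)} \<le> phi {(i, u i)}"
    and g: "distinct g" "set g = {..<N} - Vb"
    and greedy: "\<forall>k<length g. u (g ! k) \<in> U (g ! k) \<and>
       (\<forall>i'\<in>{..<N} - Vb - set (take k g). \<forall>v\<in>U i'.
          phi (sel u (set (take k g)) \<union> {(i', v)}) - phi (sel u (set (take k g)))
          \<le> phi (sel u (set (take k g)) \<union> {(g ! k, u (g ! k))}) - phi (sel u (set (take k g))))"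
    using ratt unfolding ratt_output_def Let_def by auto
  have "ratt_run phi N U u g as ac Vb"
  proof unfold_locales
    show "u i \<in> U i" if "i \<in> set g" for i
      using that greedy by (auto simp: in_set_conv_nth)
    show "phi (sel u (set (take k g)) \<union> {(i, v)}) - phi (sel u (set (take k g)))
        \<le> phi (sel u (set (take k g)) \<union> {(g ! k, u (g ! k))}) - phi (sel u (set (take k g)))"
      if "k < length g" "i \<in> set g - set (take k g)" "v \<in> U i" for k i v
      using greedy that g(2) by blast
    show "card Vb = min (as + caa N ac) N"
      using Vb(2) True by simp
  qed (use mono norm g Vb N U nonneg bait dominates in auto)
  then show ?thesis
    by (rule that)
next
  case False
  then have all: "\<forall>i<N. u i \<in> U i \<and> (\<forall>v\<in>U i. phi {(i, v)} \<le> phi {(i, u i)})"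
    using ratt unfolding ratt_output_def Let_def by auto
  have "ratt_run phi N U u [] as ac {..<N}"
  proof unfold_locales
    show "card {..<N} = min (as + caa N ac) N"
      using False by simp
  qed (use mono norm N U nonneg all in auto)
  then show ?thesis
    by (rule that)
qed

theorem theorem1:
  fixes phi :: "(nat \<times> 'u) set \<Rightarrow> real"
    and N :: nat and U :: "nat \<Rightarrow> 'u set"
    and as ac :: nat and u :: "nat \<Rightarrow> 'u"
    and As :: "nat set" and Ac :: "nat set set"
  assumes N: "1 \<le> N"
    and U: "\<And>i. i < N \<Longrightarrow> finite (U i) \<and> U i \<noteq> {}"
    and as_le: "as \<le> N" and ac_le: "ac \<le> N * (N - 1) div 2"
    and ratt: "ratt_output phi N U as ac u"
    and feas: "feasible_attack N as ac As Ac"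
    and argmin: "\<And>As' Ac'. feasible_attack N as ac As' Ac' \<Longrightarrow>
        Phi_att phi N u ({..<N} - As) (edges N - Ac) \<le> Phi_att phi N u ({..<N} - As') (edges N - Ac')"
    and mono: "nondecreasing_on (ground N U) phi"
    and norm: "normalized phi"
    and nonneg: "nonneg_on (ground N U) phi"
  shows "Phi_att phi N u ({..<N} - As) (edges N - Ac)
           \<ge> (let c = total_curvature (ground N U) phi; a = real (caa N ac) in
                if a = 0 then (1 - c) ^ 3 else min ((1 - c) ^ 3) ((1 - c) ^ 2 / a))
              * opt_value phi N U as ac
       \<and> ((submodular_on (ground N U) phi \<and> (\<forall>x\<in>ground N U. phi {x} \<noteq> 0)) \<longrightarrow>
          Phi_att phi N u ({..<N} - As) (edges N - Ac)
           \<ge> (let k = curvature (ground N U) phi; a = real (caa N ac) in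
                if a = 0 then (1 - k) / (1 + k) else min ((1 - k) / (1 + k)) ((1 - k) / a))
              * opt_value phi N U as ac)"
proof -
  obtain g Vb where "ratt_run phi N U u g as ac Vb"
    using ratt_run_if_ratt_output[OF ratt N U mono _ nonneg] norm unfolding normalized_def by blast
  then interpret ratt_run phi N U u g as ac Vb .
  show ?thesis
    using total_curvature_guarantee[OF feas] curvature_guarantee[OF feas] by blast
qed

end
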